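(* Let $(E,\tau)$ be a locally solid vector lattice. Then $\tau$ is locally solidly submetrisable if and only if $C_\tau=E$.
   Context: All vector lattices are real and Archimedean; linear topologies are Hausdorff. A locally solid topology on a vector lattice is a linear topology such that zero has a neighbourhood basis of solid sets. A locally solid topology on a vector lattice $G$ is solidly submetrisable if it is finer than some metrisable locally solid topology on $G$. $\tau$ is locally solidly submetrisable if for every $x\in E$ the restriction $\tau|_{B_x}$ to the band $B_x$ generated by $x$ is solidly submetrisable. A sequence $(V_n)_{n\geq1}$ of $\tau$-neighbourhoods of zero is normal if $V_{n+1}+V_{n+1}\subseteq V_n$ for all $n$. The carrier of $\tau$ is $C_\tau=\bigcup\{N^{\mathrm d}: N=\bigcap_{n\geq1}V_n \text{ for some normal sequence }(V_n)\text{ of solid }\tau\text{-neighbourhoods of zero}\}$, where $N^{\mathrm d}$ is the disjoint complement of $N$ in $E$. *)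

theory Defs
  imports "HOL-Analysis.Analysis"
begin

text \<open>A real vector lattice is modelled as a type of class ordered_real_vector which is
  moreover a lattice (w.r.t. the same order). Archimedean property is an explicit hypothesis.\<close>

definition vabs :: "'a::{ordered_real_vector,lattice} \<Rightarrow> 'a" where
  "vabs x = sup x (- x)"

definition archimedean_vl :: "'a::{ordered_real_vector,lattice} itself \<Rightarrow> bool" where
  "archimedean_vl _ \<longleftrightarrow>
     (\<forall>x y::'a. 0 \<le> x \<and> (\<forall>n::nat. real n *\<^sub>R x \<le> y) \<longrightarrow> x = 0)"

definition disjoint_complement :: "'a::{ordered_real_vector,lattice} set \<Rightarrow> 'a set" where
  "disjoint_complement N = {y. \<forall>z\<in>N. inf (vabs y) (vabs z) = 0}"

definition solid :: "'a::{ordered_real_vector,lattice} set \<Rightarrow> bool" where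
  "solid A \<longleftrightarrow> (\<forall>x\<in>A. \<forall>y. vabs y \<le> vabs x \<longrightarrow> y \<in> A)"

definition is_sup_of :: "'a::{ordered_real_vector,lattice} set \<Rightarrow> 'a \<Rightarrow> bool" where
  "is_sup_of D s \<longleftrightarrow> (\<forall>d\<in>D. d \<le> s) \<and> (\<forall>u. (\<forall>d\<in>D. d \<le> u) \<longrightarrow> s \<le> u)"

definition ideal_vl :: "'a::{ordered_real_vector,lattice} set \<Rightarrow> bool" where
  "ideal_vl I \<longleftrightarrow> 0 \<in> I \<and> (\<forall>x\<in>I. \<forall>y\<in>I. x + y \<in> I) \<and>
     (\<forall>c. \<forall>x\<in>I. c *\<^sub>R x \<in> I) \<and> solid I"

definition band :: "'a::{ordered_real_vector,lattice} set \<Rightarrow> bool" where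
  "band B \<longleftrightarrow> ideal_vl B \<and> (\<forall>D s. D \<subseteq> B \<and> is_sup_of D s \<longrightarrow> s \<in> B)"

definition band_generated :: "'a::{ordered_real_vector,lattice} \<Rightarrow> 'a set" where
  "band_generated x = \<Inter>{B. band B \<and> x \<in> B}"

definition nbhd0 :: "'a::{ordered_real_vector,lattice} topology \<Rightarrow> 'a set \<Rightarrow> bool" where
  "nbhd0 T V \<longleftrightarrow> (\<exists>W. openin T W \<and> 0 \<in> W \<and> W \<subseteq> V)"

definition linear_topology_on :: "'a::{ordered_real_vector,lattice} set \<Rightarrow> 'a topology \<Rightarrow> bool" where
  "linear_topology_on S T \<longleftrightarrow> topspace T = S \<and> Hausdorff_space T \<and>
     continuous_map (prod_topology T T) T (\<lambda>(a, b). a + b) \<and>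
     continuous_map (prod_topology euclideanreal T) T (\<lambda>(c, a). c *\<^sub>R a)"

text \<open>Locally solid topology on the sub vector lattice S (for an ideal S, solidity in S
  is the same as solidity in E of a subset of S).\<close>
definition locally_solid_on :: "'a::{ordered_real_vector,lattice} set \<Rightarrow> 'a topology \<Rightarrow> bool" where
  "locally_solid_on S T \<longleftrightarrow> linear_topology_on S T \<and>
     (\<forall>U. nbhd0 T U \<longrightarrow> (\<exists>V. V \<subseteq> S \<and> (\<forall>x\<in>V. \<forall>y\<in>S. vabs y \<le> vabs x \<longrightarrow> y \<in> V)
                                  \<and> nbhd0 T V \<and> V \<subseteq> U))"

definition solidly_submetrisable_on :: "'a::{ordered_real_vector,lattice} set \<Rightarrow> 'a topology \<Rightarrow> bool" where
  "solidly_submetrisable_on S T \<longleftrightarrow>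
     (\<exists>\<sigma>. locally_solid_on S \<sigma> \<and> metrizable_space \<sigma> \<and> (\<forall>U. openin \<sigma> U \<longrightarrow> openin T U))"

definition locally_solidly_submetrisable :: "'a::{ordered_real_vector,lattice} topology \<Rightarrow> bool" where
  "locally_solidly_submetrisable T \<longleftrightarrow>
     (\<forall>x. solidly_submetrisable_on (band_generated x) (subtopology T (band_generated x)))"

definition normal_seq :: "'a::{ordered_real_vector,lattice} topology \<Rightarrow> (nat \<Rightarrow> 'a set) \<Rightarrow> bool" where
  "normal_seq T V \<longleftrightarrow> (\<forall>n. nbhd0 T (V n) \<and> {a + b | a b. a \<in> V (Suc n) \<and> b \<in> V (Suc n)} \<subseteq> V n)"

definition carrier_top :: "'a::{ordered_real_vector,lattice} topology \<Rightarrow> 'a set" where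
  "carrier_top T = \<Union>{disjoint_complement N | N. \<exists>V. normal_seq T V \<and> (\<forall>n. solid (V n)) \<and> N = (\<Inter>n. V n)}"

end

theory Submission
  imports Defs "HOL-Library.Lattice_Algebras"
begin

(* If C_tau = E, each x is disjoint from N, the intersection of a normal sequence of solid
   neighbourhoods V_n, and then so is the band B_x; hence the V_n separate the points of B_x.
   Reading V_n as a ball of radius 2^-n, the infimum of the dyadic weights 2^-n_1 + ... + 2^-n_k
   of the sums V_n_1 + ... + V_n_k that dominate |y| is a monotone F-seminorm (the construction of
   Birkhoff and Kakutani); on B_x it is a metric whose topology is locally solid and coarser than
   tau.
   Conversely, a metrisable linear topology on B_x coarser than tau has a normal sequence of zero
   neighbourhoods W_n with trivial intersection. The sets of those y in E all of whose positive
   minorants of |y| in B_x lie in W_n form a normal sequence of solid tau-neighbourhoods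
   (normality is the Riesz decomposition property), and x is disjoint from their intersection:
   for z in it, inf |x| |z| lies in B_x and hence in every W_n. *)

section \<open>Vector lattice arithmetic\<close>

interpretation vl: lattice_ab_group_add_abs vabs "(+)" "0 :: 'a::{ordered_real_vector,lattice}"
    "(-)" uminus "(\<le>)" "(<)" inf sup
  by unfold_locales (simp add: vabs_def)

lemma scaleR_sup_distrib_nonneg:
  fixes a b :: "'a::{ordered_real_vector,lattice}"
  assumes "0 \<le> c"
  shows "c *\<^sub>R sup a b = sup (c *\<^sub>R a) (c *\<^sub>R b)"
proof (cases "c = 0")
  case False
  with assms have "0 < c" by simp
  have "sup a b \<le> inverse c *\<^sub>R sup (c *\<^sub>R a) (c *\<^sub>R b)"
  proof (rule sup_least)
    show "a \<le> inverse c *\<^sub>R sup (c *\<^sub>R a) (c *\<^sub>R b)"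
      using scaleR_left_mono[OF sup_ge1, of "inverse c" "c *\<^sub>R a" "c *\<^sub>R b"] \<open>0 < c\<close> by simp
    show "b \<le> inverse c *\<^sub>R sup (c *\<^sub>R a) (c *\<^sub>R b)"
      using scaleR_left_mono[OF sup_ge2, of "inverse c" "c *\<^sub>R b" "c *\<^sub>R a"] \<open>0 < c\<close> by simp
  qed
  from scaleR_left_mono[OF this assms]
  have "c *\<^sub>R sup a b \<le> sup (c *\<^sub>R a) (c *\<^sub>R b)"
    using \<open>0 < c\<close> by simp
  moreover have "sup (c *\<^sub>R a) (c *\<^sub>R b) \<le> c *\<^sub>R sup a b"
    using assms by (simp add: scaleR_left_mono)
  ultimately show ?thesis by (rule antisym)
qed simp

lemma scaleR_inf_distrib_nonneg:
  fixes a b :: "'a::{ordered_real_vector,lattice}"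
  assumes "0 \<le> c"
  shows "c *\<^sub>R inf a b = inf (c *\<^sub>R a) (c *\<^sub>R b)"
proof -
  have "c *\<^sub>R inf a b = - (c *\<^sub>R sup (- a) (- b))"
    by (simp only: vl.inf_eq_neg_sup[of a b] scaleR_minus_right)
  also have "\<dots> = inf (c *\<^sub>R a) (c *\<^sub>R b)"
    using scaleR_sup_distrib_nonneg[OF assms, of "- a" "- b"] by simp
  finally show ?thesis .
qed

lemma vabs_scaleR: "vabs (c *\<^sub>R x) = \<bar>c\<bar> *\<^sub>R vabs x"
proof -
  have nonneg: "vabs (t *\<^sub>R y) = t *\<^sub>R vabs y" if "0 \<le> t" for t and y :: 'a
    using that by (simp add: vabs_def scaleR_sup_distrib_nonneg)
  show ?thesis
  proof (cases "0 \<le> c")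
    case False
    then have "vabs (c *\<^sub>R x) = (- c) *\<^sub>R vabs (- x)"
      using nonneg[of "- c" "- x"] by simp
    with False show ?thesis by simp
  qed (simp add: nonneg)
qed

lemma riesz_decomposition:
  fixes u a b :: "'a::{ordered_real_vector,lattice}"
  assumes "0 \<le> u" "u \<le> a + b" "0 \<le> a" "0 \<le> b"
  obtains u1 u2 where "u = u1 + u2" "0 \<le> u1" "u1 \<le> a" "0 \<le> u2" "u2 \<le> b"
proof -
  have "u - inf u a = sup 0 (u - a)"
    by (simp add: vl.diff_inf_eq_sup vl.add_sup_distrib_left)
  then have "0 \<le> u - inf u a" "u - inf u a \<le> b"
    using assms by (simp_all add: diff_le_eq add.commute)
  moreover have "0 \<le> inf u a" "inf u a \<le> a"
    using assms by simp_all
  ultimately show thesis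
    by (metis that add.commute diff_add_cancel)
qed

lemma disjoint_mono:
  fixes a b w :: "'a::{ordered_real_vector,lattice}"
  assumes "0 \<le> a" "a \<le> b" "0 \<le> w" "inf b w = 0"
  shows "inf a w = 0"
proof -
  have "inf a w \<le> inf b w"
    using assms(2) by (rule inf_mono) simp
  then show ?thesis
    using assms by (simp add: antisym)
qed

lemma inf_add_le_add_inf:
  fixes a b c :: "'a::{ordered_real_vector,lattice}"
  assumes "0 \<le> a" "0 \<le> b" "0 \<le> c"
  shows "inf (a + b) c \<le> inf a c + inf b c"
proof -
  have "inf a c + inf b c = inf (inf (a + b) (c + b)) (inf (a + c) (c + c))"
    by (simp add: vl.add_inf_distrib_left vl.add_inf_distrib_right)
  moreover have "c \<le> c + b" "c \<le> a + c" "c \<le> c + c"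
    using assms by (simp_all add: add_increasing add_increasing2)
  ultimately show ?thesis
    by (simp add: le_infI1 le_infI2)
qed

lemma disjoint_add:
  fixes a b w :: "'a::{ordered_real_vector,lattice}"
  assumes "0 \<le> a" "0 \<le> b" "0 \<le> w" "inf a w = 0" "inf b w = 0"
  shows "inf (a + b) w = 0"
  using inf_add_le_add_inf[OF assms(1-3)] assms by (simp add: antisym)

lemma disjoint_scaleR:
  fixes a w :: "'a::{ordered_real_vector,lattice}"
  assumes "0 \<le> a" "0 \<le> w" "inf a w = 0" "0 \<le> t"
  shows "inf (t *\<^sub>R a) w = 0"
proof -
  define s where "s = max t 1"
  have "inf (t *\<^sub>R a) w \<le> inf (s *\<^sub>R a) (s *\<^sub>R w)"
    using assms scaleR_right_mono[of t s a] scaleR_right_mono[of 1 s w]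
    by (intro inf_mono) (auto simp: s_def)
  also have "\<dots> = 0"
    using assms by (simp add: s_def scaleR_inf_distrib_nonneg[symmetric])
  finally show ?thesis
    using assms by (intro antisym) (simp_all add: scaleR_nonneg_nonneg)
qed

lemma disjoint_pos_part_sup:
  fixes w s :: "'a::{ordered_real_vector,lattice}"
  assumes "0 \<le> w" "is_sup_of D s" "\<And>d. d \<in> D \<Longrightarrow> inf (sup d 0) w = 0"
  shows "inf (sup s 0) w = 0"
proof -
  define q where "q = sup (sup s 0) w - w"
  have "d \<le> q" if "d \<in> D" for d
  proof -
    have "d \<le> s"
      using assms(2) that by (simp add: is_sup_of_def)
    have "sup d 0 + w = sup (sup d 0) w"
      using vl.add_eq_inf_sup[of "sup d 0" w] assms(3)[OF that] by simp
    also have "\<dots> \<le> sup (sup s 0) w"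
      using \<open>d \<le> s\<close> by (auto intro: le_supI1)
    finally have "sup d 0 + w \<le> sup (sup s 0) w" .
    then show "d \<le> q"
      unfolding q_def le_diff_eq by (meson add_right_mono order_trans sup_ge1)
  qed
  then have "sup s 0 \<le> q"
    using assms(2) by (simp add: is_sup_of_def q_def)
  then have "sup s 0 + w \<le> sup (sup s 0) w"
    by (simp add: q_def le_diff_eq)
  then have "inf (sup s 0) w \<le> 0"
    using vl.add_eq_inf_sup[of "sup s 0" w] by simp
  then show ?thesis
    using assms(1) by (intro antisym) simp_all
qed

lemma pos_part_le_vabs: "sup x 0 \<le> vabs (x::'a::{ordered_real_vector,lattice})"
  by (simp add: vl.abs_ge_self)

lemma neg_part_le_vabs: "sup (- x) 0 \<le> vabs (x::'a::{ordered_real_vector,lattice})"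
  by (simp add: vl.abs_ge_minus_self)

lemma vabs_le_pos_part_add_neg_part:
  "vabs (s::'a::{ordered_real_vector,lattice}) \<le> sup s 0 + sup (- s) 0"
  by (simp add: vabs_def add_increasing add_increasing2 le_supI1)

section \<open>Bands\<close>

lemma ideal_disjoint_complement:
  "ideal_vl (disjoint_complement (N::'a::{ordered_real_vector,lattice} set))"
proof -
  let ?A = "disjoint_complement N"
  have "0 \<in> ?A"
    by (simp add: disjoint_complement_def inf_absorb1)
  moreover have "y1 + y2 \<in> ?A" if "y1 \<in> ?A" "y2 \<in> ?A" for y1 y2
    using that disjoint_add[OF vl.abs_ge_zero vl.abs_ge_zero vl.abs_ge_zero]
      disjoint_mono[OF vl.abs_ge_zero vl.abs_triangle_ineq vl.abs_ge_zero]
    by (simp add: disjoint_complement_def) blast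
  moreover have "c *\<^sub>R y \<in> ?A" if "y \<in> ?A" for c y
    using that by (simp add: disjoint_complement_def vabs_scaleR disjoint_scaleR)
  moreover have "solid ?A"
    by (auto simp: solid_def disjoint_complement_def intro: disjoint_mono[OF vl.abs_ge_zero])
  ultimately show ?thesis
    unfolding ideal_vl_def by blast
qed

lemma disjoint_complement_sup_closed:
  fixes N :: "'a::{ordered_real_vector,lattice} set"
  assumes "D \<subseteq> disjoint_complement N" "is_sup_of D s"
  shows "s \<in> disjoint_complement N"
proof (cases "D = {}")
  case True
  then have "s \<le> 0" "s \<le> s + s"
    using assms(2) unfolding is_sup_of_def by blast+
  then have "s = 0"
    by (metis antisym le_add_same_cancel1)
  then show ?thesis
    using ideal_disjoint_complement[of N] by (simp add: ideal_vl_def)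
next
  case False
  then obtain d0 where "d0 \<in> D" by blast
  show ?thesis
    unfolding disjoint_complement_def
  proof (intro CollectI ballI)
    fix z assume "z \<in> N"
    then have disj: "inf (vabs d) (vabs z) = 0" if "d \<in> D" for d
      using that assms(1) by (auto simp: disjoint_complement_def)
    have "inf (sup s 0) (vabs z) = 0"
      using disjoint_mono[OF _ pos_part_le_vabs vl.abs_ge_zero disj]
      by (intro disjoint_pos_part_sup[OF vl.abs_ge_zero assms(2)]) simp
    moreover have "sup (- s) 0 \<le> sup (- d0) 0"
      using \<open>d0 \<in> D\<close> assms(2) by (auto simp: is_sup_of_def le_supI1)
    then have "inf (sup (- s) 0) (vabs z) = 0"
      using disjoint_mono[OF _ order_trans[OF _ neg_part_le_vabs] vl.abs_ge_zero
          disj[OF \<open>d0 \<in> D\<close>]]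
      by simp
    ultimately show "inf (vabs s) (vabs z) = 0"
      by (intro disjoint_mono[OF vl.abs_ge_zero vabs_le_pos_part_add_neg_part] disjoint_add) auto
  qed
qed

lemma band_disjoint_complement:
  "band (disjoint_complement (N::'a::{ordered_real_vector,lattice} set))"
  using ideal_disjoint_complement disjoint_complement_sup_closed by (auto simp: band_def)

lemma band_Inter:
  assumes "\<And>B. B \<in> \<BB> \<Longrightarrow> band B"
  shows "band (\<Inter>\<BB>)"
proof -
  have "ideal_vl (\<Inter>\<BB>)"
    using assms unfolding band_def ideal_vl_def solid_def by auto
  moreover have "s \<in> \<Inter>\<BB>" if "D \<subseteq> \<Inter>\<BB>" "is_sup_of D s" for D s
  proof
    fix B assume "B \<in> \<BB>"
    with that have "D \<subseteq> B"
      by blast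
    with that(2) show "s \<in> B"
      using assms[OF \<open>B \<in> \<BB>\<close>] by (simp add: band_def)
  qed
  ultimately show ?thesis
    unfolding band_def by blast
qed

lemma band_band_generated: "band (band_generated x)"
  unfolding band_generated_def by (rule band_Inter) simp

lemma mem_band_generated: "x \<in> band_generated x"
  unfolding band_generated_def by simp

lemma band_generated_subset: "band B \<Longrightarrow> x \<in> B \<Longrightarrow> band_generated x \<subseteq> B"
  unfolding band_generated_def by blast

lemma ideal_band_generated: "ideal_vl (band_generated x)"
  using band_band_generated[of x] by (simp add: band_def)

lemma ideal_vl_diff:
  assumes "ideal_vl B" "x \<in> B" "y \<in> B"
  shows "x - y \<in> B"
proof -
  have "x + (- 1) *\<^sub>R y \<in> B"
    using assms unfolding ideal_vl_def by blast
  then show ?thesis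
    by simp
qed

section \<open>Linear topologies\<close>

abbreviation solid_in :: "'a::{ordered_real_vector,lattice} set \<Rightarrow> 'a set \<Rightarrow> bool" where
  "solid_in S V \<equiv> \<forall>x\<in>V. \<forall>y\<in>S. vabs y \<le> vabs x \<longrightarrow> y \<in> V"

lemma nbhd0_mono: "nbhd0 T A \<Longrightarrow> A \<subseteq> A' \<Longrightarrow> nbhd0 T A'"
  unfolding nbhd0_def by blast

lemma nbhd0_Int: "nbhd0 T A \<Longrightarrow> nbhd0 T A' \<Longrightarrow> nbhd0 T (A \<inter> A')"
  unfolding nbhd0_def by (meson IntI Int_mono openin_Int)

lemma half_nbhd0:
  assumes "linear_topology_on S \<sigma>" "nbhd0 \<sigma> U"
  obtains W where "nbhd0 \<sigma> W" "W + W \<subseteq> U"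
proof -
  obtain G where G: "openin \<sigma> G" "0 \<in> G" "G \<subseteq> U"
    using assms(2) unfolding nbhd0_def by blast
  let ?P = "{ab \<in> topspace (prod_topology \<sigma> \<sigma>). (\<lambda>(a, b). a + b) ab \<in> G}"
  have "continuous_map (prod_topology \<sigma> \<sigma>) \<sigma> (\<lambda>(a, b). a + b)"
    using assms(1) unfolding linear_topology_on_def by blast
  then have "openin (prod_topology \<sigma> \<sigma>) ?P"
    using G(1) by (rule openin_continuous_map_preimage)
  moreover have "(0, 0) \<in> ?P"
    using G(1,2) openin_subset[OF G(1)] by auto
  ultimately obtain U1 U2 where U: "openin \<sigma> U1" "openin \<sigma> U2" "0 \<in> U1" "0 \<in> U2" "U1 \<times> U2 \<subseteq> ?P"
    by (subst (asm) openin_prod_topology_alt) (elim allE impE exE conjE)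
  show thesis
  proof
    show "nbhd0 \<sigma> (U1 \<inter> U2)"
      unfolding nbhd0_def using U by (blast intro: openin_Int)
    show "U1 \<inter> U2 + U1 \<inter> U2 \<subseteq> U"
      using U(5) G(3) by (force simp: set_plus_def)
  qed
qed

lemma (in Metric_space) Inter_mball_inverse_Suc_subset: "(\<Inter>n. mball a (1 / Suc n)) \<subseteq> {a}"
proof
  fix y assume y: "y \<in> (\<Inter>n. mball a (1 / Suc n))"
  then have "a \<in> M" "y \<in> M" and small: "d a y < 1 / Suc n" for n
    by auto
  have "\<not> 0 < d a y"
  proof
    assume "0 < d a y"
    then obtain n where "1 / Suc n < d a y"
      by (rule nat_approx_posE)
    with small[of n] show False
      by simp
  qed
  then show "y \<in> {a}"
    using \<open>a \<in> M\<close> \<open>y \<in> M\<close> nonneg[of a y] zero[of a y] by simp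
qed

lemma metrizable_linear_topology_normal_seq:
  assumes "linear_topology_on S \<sigma>" "metrizable_space \<sigma>" "0 \<in> S"
  obtains W where "\<And>n. nbhd0 \<sigma> (W n)" "\<And>n. W (Suc n) + W (Suc n) \<subseteq> W n" "(\<Inter>n. W n) \<subseteq> {0}"
proof -
  obtain M d where "Metric_space M d" and \<sigma>: "\<sigma> = Metric_space.mtopology M d"
    using assms(2) unfolding metrizable_space_def by blast
  interpret Metric_space M d
    by fact
  have "0 \<in> M"
    using assms(1,3) \<sigma> by (simp add: linear_topology_on_def)
  then have ball: "nbhd0 \<sigma> (mball 0 r)" if "0 < r" for r
    unfolding nbhd0_def \<sigma> using that by (intro exI[of _ "mball 0 r"]) auto
  define P where "P n W \<longleftrightarrow> nbhd0 \<sigma> W \<and> W \<subseteq> mball 0 (1 / Suc n)" for n W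
  have "\<exists>W'. P (Suc n) W' \<and> W' + W' \<subseteq> W" if PW: "P n W" for n W
  proof -
    have "nbhd0 \<sigma> (W \<inter> mball 0 (1 / Suc (Suc n)))"
      using PW ball by (intro nbhd0_Int) (simp_all add: P_def)
    then obtain W' where W': "nbhd0 \<sigma> W'" "W' + W' \<subseteq> W \<inter> mball 0 (1 / Suc (Suc n))"
      using half_nbhd0[OF assms(1)] by blast
    moreover have "W' \<subseteq> W' + W'"
      using W'(1) by (auto simp: nbhd0_def set_plus_def intro: bexI[of _ 0])
    ultimately show ?thesis
      unfolding P_def by blast
  qed
  moreover have "P 0 (mball 0 1)"
    using ball by (simp add: P_def)
  ultimately obtain W where W: "\<And>n. P n (W n)" "\<And>n. W (Suc n) + W (Suc n) \<subseteq> W n"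
    using dependent_nat_choice[of P "\<lambda>_ W W'. W' + W' \<subseteq> W"] by blast
  have "W n \<subseteq> mball 0 (1 / Suc n)" for n
    using W(1) by (simp add: P_def)
  then have "(\<Inter>n. W n) \<subseteq> (\<Inter>n. mball 0 (1 / Suc n))"
    by blast
  also have "\<dots> \<subseteq> {0}"
    by (rule Inter_mball_inverse_Suc_subset)
  finally show thesis
    using W by (intro that[of W]) (simp_all add: P_def)
qed

lemma linear_topology_translation_open:
  assumes "linear_topology_on UNIV \<tau>" "openin \<tau> G"
  shows "openin \<tau> {z. z - a \<in> G}"
proof -
  have "continuous_map \<tau> (prod_topology \<tau> \<tau>) (\<lambda>z. (z, - a))"
    using assms(1) by (intro continuous_map_pairedI) (auto simp: linear_topology_on_def)
  then have "continuous_map \<tau> \<tau> (\<lambda>z. z - a)"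
    using continuous_map_compose assms(1) unfolding linear_topology_on_def
    by (fastforce simp: o_def)
  from openin_continuous_map_preimage[OF this assms(2)] show ?thesis
    using assms(1) by (simp add: linear_topology_on_def)
qed

lemma linear_topology_absorbing:
  assumes "linear_topology_on UNIV \<tau>" "nbhd0 \<tau> G"
  shows "\<exists>t>0. t *\<^sub>R y \<in> G"
proof -
  obtain Q where Q: "openin \<tau> Q" "0 \<in> Q" "Q \<subseteq> G"
    using assms(2) unfolding nbhd0_def by blast
  have "continuous_map euclideanreal (prod_topology euclideanreal \<tau>) (\<lambda>c. (c, y))"
    using assms(1) by (intro continuous_map_pairedI) (auto simp: linear_topology_on_def)
  then have "continuous_map euclideanreal \<tau> (\<lambda>c. c *\<^sub>R y)"
    using continuous_map_compose assms(1) unfolding linear_topology_on_def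
    by (fastforce simp: o_def)
  from openin_continuous_map_preimage[OF this Q(1)]
  have "open {c. c *\<^sub>R y \<in> Q}"
    by simp
  moreover have "(0::real) \<in> {c. c *\<^sub>R y \<in> Q}"
    using Q(2) by simp
  ultimately obtain e where "0 < e" "ball 0 e \<subseteq> {c. c *\<^sub>R y \<in> Q}"
    by (meson open_contains_ball)
  then have "(e/2) *\<^sub>R y \<in> Q"
    by (auto simp: subset_iff)
  with \<open>0 < e\<close> Q(3) show ?thesis
    by (intro exI[of _ "e/2"]) auto
qed

lemma continuous_map_prod_mtopology_intro:
  assumes "Metric_space M1 d1" "Metric_space M2 d2" "Metric_space M d"
    and "f ` (M1 \<times> M2) \<subseteq> M"
    and "\<And>a b \<epsilon>. a \<in> M1 \<Longrightarrow> b \<in> M2 \<Longrightarrow> 0 < \<epsilon> \<Longrightarrow>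
      \<exists>\<delta>>0. \<forall>x\<in>M1. \<forall>y\<in>M2. d1 a x < \<delta> \<longrightarrow> d2 b y < \<delta> \<longrightarrow> d (f (a, b)) (f (x, y)) < \<epsilon>"
  shows "continuous_map
    (prod_topology (Metric_space.mtopology M1 d1) (Metric_space.mtopology M2 d2))
    (Metric_space.mtopology M d) f"
proof -
  interpret Metric_space12 M1 d1 M2 d2
    using assms(1,2) by (simp add: Metric_space12_def)
  have "continuous_map Prod_metric.mtopology (Metric_space.mtopology M d) f"
    unfolding Prod_metric.metric_continuous_map[OF assms(3)]
  proof (intro conjI ballI allI impI)
    fix ab :: "'a \<times> 'b" and \<epsilon> :: real
    assume "ab \<in> M1 \<times> M2" "0 < \<epsilon>"
    then obtain a b \<delta> where ab: "ab = (a, b)" "a \<in> M1" "b \<in> M2" and "0 < \<delta>"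
      and \<delta>: "\<forall>x\<in>M1. \<forall>y\<in>M2. d1 a x < \<delta> \<longrightarrow> d2 b y < \<delta> \<longrightarrow> d (f (a, b)) (f (x, y)) < \<epsilon>"
      using assms(5) by (cases ab) blast
    show "\<exists>\<delta>>0. \<forall>xy. xy \<in> M1 \<times> M2 \<and> prod_dist d1 d2 ab xy < \<delta> \<longrightarrow> d (f ab) (f xy) < \<epsilon>"
    proof (intro exI[of _ \<delta>] conjI allI impI)
      fix xy assume xy: "xy \<in> M1 \<times> M2 \<and> prod_dist d1 d2 ab xy < \<delta>"
      then obtain x y where "xy = (x, y)" "x \<in> M1" "y \<in> M2"
        by auto
      moreover have "d1 a x < \<delta>" "d2 b y < \<delta>"
        using xy component_le_prod_metric(1)[of a x b y] component_le_prod_metric(2)[of b y a x]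
        by (simp_all add: ab \<open>xy = (x, y)\<close>)
      ultimately show "d (f ab) (f xy) < \<epsilon>"
        using \<delta> by (simp add: ab)
    qed fact
  qed (use assms(4) in simp)
  then show ?thesis
    by (simp add: mtopology_prod_metric)
qed

section \<open>Riesz pseudonorms\<close>

locale riesz_pseudonorm =
  fixes p :: "'a::{ordered_real_vector,lattice} \<Rightarrow> real"
  assumes mono: "vabs x \<le> vabs y \<Longrightarrow> p x \<le> p y"
    and triangle: "p (x + y) \<le> p x + p y"
    and zero: "p 0 = 0"
    and small_multiple: "0 < e \<Longrightarrow> \<exists>t>0. p (t *\<^sub>R x) < e"
begin

lemma nonneg: "0 \<le> p x"
  using mono[of 0 x] zero by simp

lemma minus: "p (- x) = p x"
  by (simp add: antisym mono)

lemma scaleR_of_nat_le: "p (real k *\<^sub>R x) \<le> real k * p x"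
proof (induction k)
  case (Suc k)
  have "p (real (Suc k) *\<^sub>R x) \<le> p x + p (real k *\<^sub>R x)"
    using triangle[of x "real k *\<^sub>R x"] by (simp add: algebra_simps)
  with Suc show ?case
    by (simp add: algebra_simps)
qed (simp add: zero)

lemma scaleR_mono: "\<bar>c\<bar> \<le> t \<Longrightarrow> p (c *\<^sub>R x) \<le> p (t *\<^sub>R x)"
  by (rule mono) (simp add: vabs_scaleR scaleR_right_mono)

lemma scaleR_le: "\<bar>c\<bar> \<le> real k \<Longrightarrow> p (c *\<^sub>R x) \<le> real k * p x"
  using scaleR_mono scaleR_of_nat_le order_trans by blast

end

locale riesz_pseudonorm_on = riesz_pseudonorm p for p +
  fixes B :: "'a::{ordered_real_vector,lattice} set"
  assumes ideal: "ideal_vl B"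
    and definite: "x \<in> B \<Longrightarrow> p x = 0 \<Longrightarrow> x = 0"

sublocale riesz_pseudonorm_on \<subseteq> metric: Metric_space B "\<lambda>x y. p (x - y)"
proof
  show "p (x - y) = p (y - x)" for x y
    using minus[of "x - y"] by simp
  show "p (x - y) = 0 \<longleftrightarrow> x = y" if "x \<in> B" "y \<in> B" for x y
    using definite[OF ideal_vl_diff[OF ideal that]] zero by auto
  show "p (x - z) \<le> p (x - y) + p (y - z)" for x y z
    using triangle[of "x - y" "y - z"] by simp
qed (rule nonneg)

context riesz_pseudonorm_on
begin

lemma continuous_map_plus_mtopology:
  "continuous_map (prod_topology metric.mtopology metric.mtopology) metric.mtopology
    (\<lambda>(x, y). x + y)"
proof (rule continuous_map_prod_mtopology_intro)
  show "(\<lambda>(x, y). x + y) ` (B \<times> B) \<subseteq> B"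
    using ideal by (auto simp: ideal_vl_def)
  fix a b and \<epsilon> :: real
  assume "0 < \<epsilon>"
  have "p ((a + b) - (x + y)) < \<epsilon>" if "p (a - x) < \<epsilon>/2" "p (b - y) < \<epsilon>/2" for x y
    using triangle[of "a - x" "b - y"] that by (simp add: algebra_simps)
  with \<open>0 < \<epsilon>\<close> show "\<exists>\<delta>>0. \<forall>x\<in>B. \<forall>y\<in>B. p (a - x) < \<delta> \<longrightarrow> p (b - y) < \<delta> \<longrightarrow>
      p ((case (a, b) of (x, y) \<Rightarrow> x + y) - (case (x, y) of (x, y) \<Rightarrow> x + y)) < \<epsilon>"
    by (intro exI[of _ "\<epsilon>/2"]) auto
qed (rule metric.Metric_space_axioms Met_TC.Metric_space_axioms)+

lemma continuous_map_scaleR_mtopology: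
  "continuous_map (prod_topology euclideanreal metric.mtopology) metric.mtopology (\<lambda>(c, x). c *\<^sub>R x)"
  unfolding mtopology_is_euclidean[symmetric]
proof (rule continuous_map_prod_mtopology_intro)
  show "(\<lambda>(c, x). c *\<^sub>R x) ` (UNIV \<times> B) \<subseteq> B"
    using ideal by (auto simp: ideal_vl_def)
  fix c0 :: real and a and \<epsilon> :: real
  assume "0 < \<epsilon>"
  then obtain t where "0 < t" and t: "p (t *\<^sub>R a) < \<epsilon>/2"
    using small_multiple[of "\<epsilon>/2"] by auto
  obtain K :: nat where K: "\<bar>c0\<bar> + 1 \<le> real K"
    using real_arch_simple by blast
  define \<delta> where "\<delta> = min 1 (min t (\<epsilon> / (2 * (real K + 1))))"
  have "p (c0 *\<^sub>R a - c *\<^sub>R x) < \<epsilon>" if "dist c0 c < \<delta>" "p (a - x) < \<delta>" for c x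
  proof -
    have "\<bar>c\<bar> \<le> real K" "\<bar>c0 - c\<bar> \<le> t"
      using that(1) K by (auto simp: \<delta>_def dist_real_def)
    have "p (c *\<^sub>R (a - x)) \<le> real K * p (a - x)"
      by (rule scaleR_le) fact
    also have "\<dots> \<le> real K * (\<epsilon> / (2 * (real K + 1)))"
      using that(2) by (intro mult_left_mono) (auto simp: \<delta>_def)
    also have "\<dots> < \<epsilon>/2"
      using \<open>0 < \<epsilon>\<close> by (simp add: field_simps)
    finally have "p (c *\<^sub>R (a - x)) < \<epsilon>/2" .
    moreover have "p ((c0 - c) *\<^sub>R a) < \<epsilon>/2"
      using scaleR_mono[OF \<open>\<bar>c0 - c\<bar> \<le> t\<close>, of a] t by linarith
    moreover have "c0 *\<^sub>R a - c *\<^sub>R x = c *\<^sub>R (a - x) + (c0 - c) *\<^sub>R a"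
      by (simp add: algebra_simps)
    ultimately show ?thesis
      using triangle[of "c *\<^sub>R (a - x)" "(c0 - c) *\<^sub>R a"] by simp
  qed
  moreover have "0 < \<delta>"
    using \<open>0 < t\<close> \<open>0 < \<epsilon>\<close> by (simp add: \<delta>_def)
  ultimately show "\<exists>\<delta>>0. \<forall>c\<in>UNIV. \<forall>x\<in>B. dist c0 c < \<delta> \<longrightarrow> p (a - x) < \<delta> \<longrightarrow>
      p ((case (c0, a) of (c, x) \<Rightarrow> c *\<^sub>R x) - (case (c, x) of (c, x) \<Rightarrow> c *\<^sub>R x)) < \<epsilon>"
    by auto
qed (rule metric.Metric_space_axioms Met_TC.Metric_space_axioms)+

lemma solid_in_mball: "solid_in B (metric.mball 0 r)"
proof (intro ballI impI)
  fix x y assume x: "x \<in> metric.mball 0 r" and "y \<in> B" "vabs y \<le> vabs x"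
  then have "p y \<le> p x"
    by (intro mono)
  with x \<open>y \<in> B\<close> show "y \<in> metric.mball 0 r"
    using minus[of x] minus[of y] by auto
qed

lemma locally_solid_on_mtopology: "locally_solid_on B metric.mtopology"
  unfolding locally_solid_on_def linear_topology_on_def
proof (intro conjI allI impI)
  fix U assume "nbhd0 metric.mtopology U"
  then obtain W where W: "openin metric.mtopology W" "0 \<in> W" "W \<subseteq> U"
    unfolding nbhd0_def by blast
  have "\<exists>r>0. metric.mball 0 r \<subseteq> W"
    using W(1,2) metric.openin_mtopology by simp
  then obtain r where "0 < r" "metric.mball 0 r \<subseteq> U"
    using W(3) by blast
  moreover have "0 \<in> B"
    using ideal by (simp add: ideal_vl_def)
  ultimately show "\<exists>V\<subseteq>B. solid_in B V \<and> nbhd0 metric.mtopology V \<and> V \<subseteq> U"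
    using solid_in_mball metric.mball_subset_mspace unfolding nbhd0_def
    by (intro exI[of _ "metric.mball 0 r"]) auto
qed (simp_all add: metric.Hausdorff_space_mtopology continuous_map_plus_mtopology
    continuous_map_scaleR_mtopology)

lemma openin_subtopology_if_openin_mtopology:
  assumes "linear_topology_on UNIV \<tau>"
    and small: "\<And>r. 0 < r \<Longrightarrow> \<exists>G. openin \<tau> G \<and> 0 \<in> G \<and> (\<forall>z\<in>G. p z < r)"
    and "openin metric.mtopology U"
  shows "openin (subtopology \<tau> B) U"
  unfolding openin_subopen[of _ U]
proof
  fix a assume "a \<in> U"
  moreover have "U \<subseteq> B" "\<forall>x\<in>U. \<exists>r>0. metric.mball x r \<subseteq> U"
    using assms(3) metric.openin_mtopology by auto
  ultimately obtain r where "0 < r" "metric.mball a r \<subseteq> U" "a \<in> B"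
    by blast
  obtain G where G: "openin \<tau> G" "0 \<in> G" "\<forall>z\<in>G. p z < r"
    using small[OF \<open>0 < r\<close>] by blast
  let ?T = "{z. z - a \<in> G} \<inter> B"
  have "?T \<subseteq> metric.mball a r"
  proof
    fix z assume "z \<in> ?T"
    then have "p (a - z) < r"
      using G(3) minus[of "z - a"] by auto
    then show "z \<in> metric.mball a r"
      using \<open>z \<in> ?T\<close> \<open>a \<in> B\<close> by auto
  qed
  moreover have "openin (subtopology \<tau> B) ?T"
    using linear_topology_translation_open[OF assms(1) G(1)] by (auto simp: openin_subtopology)
  ultimately show "\<exists>T. openin (subtopology \<tau> B) T \<and> a \<in> T \<and> T \<subseteq> U"
    using \<open>a \<in> B\<close> G(2) \<open>metric.mball a r \<subseteq> U\<close> by (intro exI[of _ ?T]) auto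
qed

end

section \<open>The gauge of a normal sequence\<close>

definition dyadic_weight :: "nat list \<Rightarrow> real" where
  "dyadic_weight ns = (\<Sum>n\<leftarrow>ns. (1/2) ^ n)"

lemma dyadic_weight_Nil [simp]: "dyadic_weight [] = 0"
  and dyadic_weight_Cons [simp]: "dyadic_weight (n # ns) = (1/2) ^ n + dyadic_weight ns"
  and dyadic_weight_append [simp]: "dyadic_weight (ns @ ms) = dyadic_weight ns + dyadic_weight ms"
  by (simp_all add: dyadic_weight_def)

lemma dyadic_weight_remove1:
  "n \<in> set ns \<Longrightarrow> dyadic_weight ns = (1/2) ^ n + dyadic_weight (remove1 n ns)"
  unfolding dyadic_weight_def by (rule sum_list_map_remove1)

lemma dyadic_weight_nonneg: "0 \<le> dyadic_weight ns"
  by (induction ns) auto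

lemma dyadic_weight_pos: "ns \<noteq> [] \<Longrightarrow> 0 < dyadic_weight ns"
  by (cases ns) (auto intro: add_pos_nonneg dyadic_weight_nonneg)

lemma half_power_times_power: "k \<le> n \<Longrightarrow> (1/2::real) ^ k * 2 ^ n = 2 ^ (n - k)"
proof -
  assume "k \<le> n"
  then have "(2::real) ^ n = 2 ^ (n - k) * 2 ^ k"
    by (simp flip: power_add)
  then show ?thesis
    by (simp add: power_one_over)
qed

lemma dyadic_weight_times_power:
  "\<forall>k\<in>set ns. k \<le> n \<Longrightarrow> \<exists>K::nat. dyadic_weight ns * 2 ^ n = real K"
proof (induction ns)
  case (Cons k ns)
  then obtain K :: nat where "dyadic_weight ns * 2 ^ n = real K"
    by auto
  moreover have "(1/2::real) ^ k * 2 ^ n = real (2 ^ (n - k))"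
    using Cons.prems by (simp add: half_power_times_power)
  ultimately have "dyadic_weight (k # ns) * 2 ^ n = real (2 ^ (n - k) + K)"
    by (simp add: distrib_right)
  then show ?case
    by blast
qed simp

(* Both dyadic_weight ns and 2^-m are multiples of 2^-n, so a gap of 2^-(n+1) between them is
   already a gap of 2^-n. *)
lemma dyadic_weight_round_up:
  assumes "\<forall>k\<in>set ns. k \<le> n" "m \<le> n" "dyadic_weight ns + (1/2) ^ Suc n \<le> (1/2) ^ m"
  shows "dyadic_weight ns + (1/2) ^ n \<le> (1/2) ^ m"
proof -
  obtain K :: nat where K: "dyadic_weight ns * 2 ^ n = real K"
    using dyadic_weight_times_power[OF assms(1)] by blast
  have "(dyadic_weight ns + (1/2) ^ Suc n) * 2 ^ n \<le> (1/2) ^ m * 2 ^ n"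
    using assms(3) by (rule mult_right_mono) simp
  then have "real K + 1/2 \<le> 2 ^ (n - m)"
    using K half_power_times_power[OF assms(2)] half_power_times_power[of n n]
    by (simp add: distrib_right)
  then have "real K < real (2 ^ (n - m))"
    by (simp only: of_nat_power of_nat_numeral)
  then have "real (Suc K) \<le> real (2 ^ (n - m))"
    by (simp only: of_nat_less_iff of_nat_le_iff Suc_le_eq)
  then have "real K + 1 \<le> 2 ^ (n - m)"
    by simp
  then have "(dyadic_weight ns + (1/2) ^ n) * 2 ^ n \<le> (1/2) ^ m * 2 ^ n"
    using K half_power_times_power[OF assms(2)] half_power_times_power[of n n]
    by (simp add: distrib_right)
  then show ?thesis
    by simp
qed

lemma dyadic_weight_merge:
  assumes "Suc n \<in> set ns" "Suc n \<in> set (remove1 (Suc n) ns)"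
  shows "dyadic_weight (n # remove1 (Suc n) (remove1 (Suc n) ns)) = dyadic_weight ns"
  using dyadic_weight_remove1[OF assms(1)] dyadic_weight_remove1[OF assms(2)] by simp

lemma length_plus_sum_list_remove1:
  "n \<in> set ns \<Longrightarrow> length ns + sum_list ns = Suc (length (remove1 n ns) + sum_list (remove1 n ns) + n)"
  using sum_list_map_remove1[of n ns id] length_pos_if_in_set[of n ns] by (simp add: length_remove1)

lemma half_power_less: "0 < e \<Longrightarrow> \<exists>n. (1/2::real) ^ n < e"
  by (rule real_arch_pow_inv) simp_all

locale solid_normal_seq =
  fixes V :: "nat \<Rightarrow> 'a::{ordered_real_vector,lattice} set"
  assumes zero_mem: "0 \<in> V n"
    and add_subset: "V (Suc n) + V (Suc n) \<subseteq> V n"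
    and solid: "solid (V n)"
    and absorbing: "\<exists>t>0. t *\<^sub>R y \<in> V n"
begin

lemma Suc_subset: "V (Suc n) \<subseteq> V n"
proof
  fix a assume "a \<in> V (Suc n)"
  then have "a + 0 \<in> V (Suc n) + V (Suc n)"
    using zero_mem by (intro set_plus_intro)
  then show "a \<in> V n"
    using add_subset by auto
qed

lemma antimono: "m \<le> n \<Longrightarrow> V n \<subseteq> V m"
  using decseq_SucI[of V, OF Suc_subset] by (simp add: decseq_def)

lemma sum_list_merge:
  assumes "Suc n \<in> set ns" "Suc n \<in> set (remove1 (Suc n) ns)"
  shows "(\<Sum>k\<leftarrow>ns. V k) \<subseteq> (\<Sum>k\<leftarrow>n # remove1 (Suc n) (remove1 (Suc n) ns). V k)"
proof -
  have "(\<Sum>k\<leftarrow>ns. V k) = (V (Suc n) + V (Suc n)) + (\<Sum>k\<leftarrow>remove1 (Suc n) (remove1 (Suc n) ns). V k)"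
    using sum_list_map_remove1[OF assms(1), of V] sum_list_map_remove1[OF assms(2), of V]
    by (simp add: add.assoc)
  also have "\<dots> \<subseteq> V n + (\<Sum>k\<leftarrow>remove1 (Suc n) (remove1 (Suc n) ns). V k)"
    using add_subset by (rule set_plus_mono2) simp
  finally show ?thesis
    by simp
qed

lemma sum_list_carry:
  assumes n: "n \<in> set ns" "\<forall>k\<in>set ns. k \<le> n" and "remove1 n ns \<noteq> []"
    and weight_le: "dyadic_weight ns \<le> (1/2) ^ m"
  obtains ns' where "length ns' + sum_list ns' < length ns + sum_list ns"
    "dyadic_weight ns' \<le> (1/2) ^ m" "(\<Sum>k\<leftarrow>ns. V k) \<subseteq> (\<Sum>k\<leftarrow>ns'. V k)"
proof -
  define rest where "rest = remove1 n ns"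
  have le_n: "\<forall>k\<in>set rest. k \<le> n"
    using n set_remove1_subset[of n ns] by (auto simp: rest_def)
  have sum: "(\<Sum>k\<leftarrow>ns. V k) = V n + (\<Sum>k\<leftarrow>rest. V k)"
    unfolding rest_def by (rule sum_list_map_remove1[OF n(1)])
  have weight: "dyadic_weight ns = (1/2) ^ n + dyadic_weight rest"
    unfolding rest_def by (rule dyadic_weight_remove1[OF n(1)])
  have size: "length ns + sum_list ns = Suc (length rest + sum_list rest + n)"
    unfolding rest_def by (rule length_plus_sum_list_remove1[OF n(1)])
  have "0 < dyadic_weight rest"
    using \<open>remove1 n ns \<noteq> []\<close> dyadic_weight_pos by (simp add: rest_def)
  then have "(1/2::real) ^ n < (1/2) ^ m"
    using weight_le weight by linarith
  then have "m < n"
    using power_strict_decreasing_iff[of "1/2::real" n m] by simp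
  then obtain n' where n': "n = Suc n'" "m \<le> n'"
    by (cases n) auto
  show thesis
  proof (cases "n \<in> set rest")
    case True
    let ?ns' = "n' # remove1 n rest"
    show thesis
    proof (rule that[of ?ns'])
      show "length ?ns' + sum_list ?ns' < length ns + sum_list ns"
        using size length_plus_sum_list_remove1[OF True] by (simp add: n')
      show "dyadic_weight ?ns' \<le> (1/2) ^ m"
        using dyadic_weight_merge[of n' ns] n(1) True weight_le by (simp add: n' rest_def)
      show "(\<Sum>k\<leftarrow>ns. V k) \<subseteq> (\<Sum>k\<leftarrow>?ns'. V k)"
        using sum_list_merge[of n' ns] n(1) True by (simp add: n' rest_def)
    qed
  next
    case False
    let ?ns' = "n' # rest"
    show thesis
    proof (rule that[of ?ns'])
      show "length ?ns' + sum_list ?ns' < length ns + sum_list ns"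
        using size n'(1) by simp
      have "\<forall>k\<in>set rest. k \<le> n'"
        using le_n False n'(1) by (auto simp: le_Suc_eq)
      moreover have "dyadic_weight rest + (1/2) ^ Suc n' \<le> (1/2) ^ m"
        using weight_le weight n'(1) by simp
      ultimately show "dyadic_weight ?ns' \<le> (1/2) ^ m"
        using dyadic_weight_round_up[of rest n' m] n'(2) by (simp add: add.commute)
      show "(\<Sum>k\<leftarrow>ns. V k) \<subseteq> (\<Sum>k\<leftarrow>?ns'. V k)"
        using sum set_plus_mono2[OF Suc_subset[of n'] order_refl] n'(1) by simp
    qed
  qed
qed

(* The sets V n behave like balls of radius 2^-n. The induction carries binary digits: two copies
   of the smallest radius merge into one of the next size, and a single copy is rounded up. *)
lemma sum_list_subset: "dyadic_weight ns \<le> (1/2) ^ m \<Longrightarrow> (\<Sum>k\<leftarrow>ns. V k) \<subseteq> V m"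
proof (induction "length ns + sum_list ns" arbitrary: ns rule: less_induct)
  case less
  show ?case
  proof (cases "ns = []")
    case True
    then show ?thesis
      using zero_mem by simp
  next
    case False
    define n where "n = Max (set ns)"
    have n: "n \<in> set ns" "\<forall>k\<in>set ns. k \<le> n"
      using False by (simp_all add: n_def)
    show ?thesis
    proof (cases "remove1 n ns = []")
      case True
      then have "ns = [n]"
        using n(1) by (cases ns) (auto split: if_split_asm)
      then show ?thesis
        using less.prems antimono by simp
    next
      case False
      then obtain ns' where ns': "length ns' + sum_list ns' < length ns + sum_list ns"
        "dyadic_weight ns' \<le> (1/2) ^ m" "(\<Sum>k\<leftarrow>ns. V k) \<subseteq> (\<Sum>k\<leftarrow>ns'. V k)"
        using sum_list_carry[OF n False less.prems] by blast
      have "(\<Sum>k\<leftarrow>ns'. V k) \<subseteq> V m"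
        using ns'(1,2) by (rule less.hyps)
      with ns'(3) show ?thesis
        by (rule subset_trans)
    qed
  qed
qed

(* The gauge of the Birkhoff-Kakutani metrisation, capped at 1 so that it is always finite. *)
definition weights :: "'a \<Rightarrow> real set" where
  "weights y = insert 1 {dyadic_weight ns | ns. \<exists>v\<in>(\<Sum>k\<leftarrow>ns. V k). vabs y \<le> v}"

definition gauge :: "'a \<Rightarrow> real" where
  "gauge y = Inf (weights y)"

lemma weights_ne: "weights y \<noteq> {}"
  by (simp add: weights_def)

lemma weights_nonneg: "a \<in> weights y \<Longrightarrow> 0 \<le> a"
  by (auto simp: weights_def dyadic_weight_nonneg)

lemma gauge_le: "a \<in> weights y \<Longrightarrow> gauge y \<le> a"
  unfolding gauge_def using weights_nonneg by (intro cInf_lower bdd_belowI) auto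

lemma gauge_nonneg: "0 \<le> gauge y"
  unfolding gauge_def using weights_nonneg by (intro cInf_greatest) (auto simp: weights_def)

lemma gauge_le_of_mem: "y \<in> V n \<Longrightarrow> gauge y \<le> (1/2) ^ n"
proof -
  assume "y \<in> V n"
  then have "vabs y \<in> (\<Sum>k\<leftarrow>[n]. V k)"
    using solid[of n] by (simp add: solid_def)
  then have "dyadic_weight [n] \<in> weights y"
    unfolding weights_def by blast
  then show ?thesis
    using gauge_le by fastforce
qed

lemma mem_of_gauge_less: "gauge y < (1/2) ^ m \<Longrightarrow> y \<in> V m"
proof -
  assume "gauge y < (1/2) ^ m"
  then obtain a where "a \<in> weights y" "a < (1/2) ^ m"
    unfolding gauge_def using cInf_lessD[OF weights_ne] by blast
  moreover have "(1/2::real) ^ m \<le> 1"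
    by (simp add: power_le_one)
  ultimately obtain ns v where ns: "dyadic_weight ns < (1/2) ^ m" "v \<in> (\<Sum>k\<leftarrow>ns. V k)"
    and "vabs y \<le> v"
    unfolding weights_def by auto
  have "v \<in> V m"
    using sum_list_subset[of ns m] ns by auto
  moreover have "vabs y \<le> vabs v"
    using \<open>vabs y \<le> v\<close> vl.abs_ge_self[of v] by (rule order_trans)
  ultimately show ?thesis
    using solid[of m] by (auto simp: solid_def)
qed

lemma gauge_mono: "vabs y \<le> vabs z \<Longrightarrow> gauge y \<le> gauge z"
  unfolding gauge_def
proof (rule cInf_superset_mono)
  show "bdd_below (weights y)"
    using weights_nonneg by (intro bdd_belowI) auto
  show "weights z \<subseteq> weights y" if "vabs y \<le> vabs z"
    using that by (auto simp: weights_def intro: order_trans)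
qed (simp add: weights_def)

lemma gauge_subadditive: "gauge (y + z) \<le> gauge y + gauge z"
proof (rule field_le_epsilon)
  fix e :: real assume "0 < e"
  then obtain a b where a: "a \<in> weights y" "a < gauge y + e/2"
    and b: "b \<in> weights z" "b < gauge z + e/2"
    unfolding gauge_def using cInf_lessD[OF weights_ne]
    by (metis less_add_same_cancel1 half_gt_zero)
  have "a + b \<in> weights (y + z) \<or> 1 \<le> a + b"
  proof (cases "a = 1 \<or> b = 1")
    case False
    then obtain ns v ms w where "a = dyadic_weight ns" "v \<in> (\<Sum>k\<leftarrow>ns. V k)" "vabs y \<le> v"
      and "b = dyadic_weight ms" "w \<in> (\<Sum>k\<leftarrow>ms. V k)" "vabs z \<le> w"
      using a b by (auto simp: weights_def)
    moreover have "vabs (y + z) \<le> v + w"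
      using vl.abs_triangle_ineq add_mono calculation order_trans by blast
    ultimately have "a + b = dyadic_weight (ns @ ms)" "v + w \<in> (\<Sum>k\<leftarrow>ns @ ms. V k)"
      "vabs (y + z) \<le> v + w"
      by auto
    then show ?thesis
      unfolding weights_def by blast
  qed (use weights_nonneg a b in auto)
  moreover have "gauge (y + z) \<le> 1"
    using gauge_le by (simp add: weights_def)
  ultimately have "gauge (y + z) \<le> a + b"
    using gauge_le by fastforce
  with a b show "gauge (y + z) \<le> gauge y + gauge z + e"
    by linarith
qed

lemma gauge_zero: "gauge 0 = 0"
proof (rule antisym)
  show "gauge 0 \<le> 0"
  proof (rule field_le_epsilon)
    fix e :: real assume "0 < e"
    then obtain n where "(1/2::real) ^ n < e"
      using half_power_less by blast
    then show "gauge 0 \<le> 0 + e"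
      using gauge_le_of_mem[OF zero_mem[of n]] by simp
  qed
qed (rule gauge_nonneg)

end

sublocale solid_normal_seq \<subseteq> riesz_pseudonorm gauge
proof
  fix e :: real and x assume "0 < e"
  then obtain n where "(1/2::real) ^ n < e"
    using half_power_less by blast
  moreover obtain t where "0 < t" "t *\<^sub>R x \<in> V n"
    using absorbing by blast
  ultimately show "\<exists>t>0. gauge (t *\<^sub>R x) < e"
    using gauge_le_of_mem by (meson order_le_less_trans)
qed (simp_all add: gauge_mono gauge_subadditive gauge_zero)

section \<open>Carriers and local solid submetrisability\<close>

lemma solidly_submetrisable_on_ideal:
  assumes \<tau>: "linear_topology_on UNIV \<tau>"
    and V: "normal_seq \<tau> V" "\<And>n. solid (V n)"
    and B: "ideal_vl B"
    and separating: "\<And>y. y \<in> B \<Longrightarrow> \<forall>n. y \<in> V n \<Longrightarrow> y = 0"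
  shows "solidly_submetrisable_on B (subtopology \<tau> B)"
proof -
  have nbhd: "nbhd0 \<tau> (V n)" for n
    using V(1) by (simp add: normal_seq_def)
  interpret solid_normal_seq V
  proof
    show "0 \<in> V n" for n
      using nbhd by (auto simp: nbhd0_def)
    show "V (Suc n) + V (Suc n) \<subseteq> V n" for n
      using V(1) by (auto simp: normal_seq_def set_plus_def)
    show "\<exists>t>0. t *\<^sub>R y \<in> V n" for y n
      using linear_topology_absorbing[OF \<tau> nbhd] .
  qed (rule V(2))
  interpret riesz_pseudonorm_on gauge B
    using B separating mem_of_gauge_less by unfold_locales auto
  have "\<exists>G. openin \<tau> G \<and> 0 \<in> G \<and> (\<forall>z\<in>G. gauge z < r)" if "0 < r" for r
  proof -
    obtain m where "(1/2::real) ^ m < r"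
      using half_power_less \<open>0 < r\<close> by blast
    moreover obtain G where "openin \<tau> G" "0 \<in> G" "G \<subseteq> V m"
      using nbhd[of m] unfolding nbhd0_def by blast
    ultimately show ?thesis
      using gauge_le_of_mem by (meson order_le_less_trans subsetD)
  qed
  then show ?thesis
    unfolding solidly_submetrisable_on_def
    using locally_solid_on_mtopology metric.metrizable_space_mtopology
      openin_subtopology_if_openin_mtopology[OF \<tau>] by blast
qed

lemma solidly_submetrisable_on_band_generated:
  assumes "linear_topology_on UNIV \<tau>" "x \<in> carrier_top \<tau>"
  shows "solidly_submetrisable_on (band_generated x) (subtopology \<tau> (band_generated x))"
proof -
  obtain V where V: "normal_seq \<tau> V" "\<And>n. solid (V n)" "x \<in> disjoint_complement (\<Inter>n. V n)"
    using assms(2) unfolding carrier_top_def by blast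
  have disjoint: "band_generated x \<subseteq> disjoint_complement (\<Inter>n. V n)"
    by (rule band_generated_subset[OF band_disjoint_complement V(3)])
  show ?thesis
  proof (rule solidly_submetrisable_on_ideal[OF assms(1) V(1,2)])
    show "ideal_vl (band_generated x)"
      by (rule ideal_band_generated)
    show "y = 0" if "y \<in> band_generated x" "\<forall>n. y \<in> V n" for y
    proof -
      have "inf (vabs y) (vabs y) = 0"
        using disjoint that unfolding disjoint_complement_def by blast
      then show ?thesis
        by simp
    qed
  qed
qed

(* The largest solid set whose positive elements in B lie in W; it turns a zero neighbourhood of
   the ideal B into one of the whole space. *)
definition solid_lift :: "'a::{ordered_real_vector,lattice} set \<Rightarrow> 'a set \<Rightarrow> 'a set" where
  "solid_lift B W = {y. \<forall>u\<in>B. 0 \<le> u \<and> u \<le> vabs y \<longrightarrow> u \<in> W}"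

lemma solid_solid_lift: "solid (solid_lift B W)"
  unfolding solid_def solid_lift_def by (blast intro: order_trans)

lemma solid_lift_add:
  assumes "ideal_vl B" "W' + W' \<subseteq> W"
  shows "solid_lift B W' + solid_lift B W' \<subseteq> solid_lift B W"
proof
  fix x assume "x \<in> solid_lift B W' + solid_lift B W'"
  then obtain y z where x: "x = y + z" and y: "y \<in> solid_lift B W'" and z: "z \<in> solid_lift B W'"
    by (auto simp: set_plus_def)
  show "x \<in> solid_lift B W"
    unfolding solid_lift_def
  proof (intro CollectI ballI impI)
    fix u assume u: "u \<in> B" "0 \<le> u \<and> u \<le> vabs x"
    then have "u \<le> vabs y + vabs z"
      using vl.abs_triangle_ineq[of y z] x by (blast intro: order_trans)
    then obtain u1 u2 where u12: "u = u1 + u2" "0 \<le> u1" "u1 \<le> vabs y" "0 \<le> u2" "u2 \<le> vabs z"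
      using u vl.abs_ge_zero by (blast elim: riesz_decomposition)
    have "vabs u1 \<le> vabs u" "vabs u2 \<le> vabs u"
      using u12 u by (simp_all add: vl.abs_of_nonneg add_increasing add_increasing2)
    then have "u1 \<in> B" "u2 \<in> B"
      using assms(1) u(1) by (auto simp: ideal_vl_def solid_def)
    with y z u12 have "u1 \<in> W'" "u2 \<in> W'"
      by (auto simp: solid_lift_def)
    then show "u \<in> W"
      using assms(2) u12(1) by (auto simp: set_plus_def)
  qed
qed

lemma nbhd0_solid_lift:
  assumes "locally_solid_on UNIV \<tau>" "openin \<tau> T" "0 \<in> T" "T \<inter> B \<subseteq> W"
  shows "nbhd0 \<tau> (solid_lift B W)"
proof -
  have "nbhd0 \<tau> T"
    using assms(2,3) by (auto simp: nbhd0_def)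
  then obtain V where V: "solid_in UNIV V" "nbhd0 \<tau> V" "V \<subseteq> T"
    using assms(1) unfolding locally_solid_on_def by blast
  have "V \<subseteq> solid_lift B W"
  proof
    fix y assume "y \<in> V"
    have "u \<in> W" if "u \<in> B" "0 \<le> u" "u \<le> vabs y" for u
    proof -
      have "u \<in> V"
        using V(1) \<open>y \<in> V\<close> that by (simp add: vl.abs_of_nonneg)
      then show ?thesis
        using V(3) assms(4) \<open>u \<in> B\<close> by blast
    qed
    then show "y \<in> solid_lift B W"
      by (auto simp: solid_lift_def)
  qed
  then show ?thesis
    using V(2) by (rule nbhd0_mono[rotated])
qed

lemma subset_disjoint_complement_solid_lift:
  assumes "ideal_vl B" "(\<Inter>n. W n) \<subseteq> {0}"
  shows "B \<subseteq> disjoint_complement (\<Inter>n. solid_lift B (W n))"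
proof
  fix x assume "x \<in> B"
  show "x \<in> disjoint_complement (\<Inter>n. solid_lift B (W n))"
    unfolding disjoint_complement_def
  proof (intro CollectI ballI)
    fix z assume z: "z \<in> (\<Inter>n. solid_lift B (W n))"
    let ?u = "inf (vabs x) (vabs z)"
    have "vabs ?u \<le> vabs x"
      by (simp add: vl.abs_of_nonneg)
    then have "?u \<in> B"
      using assms(1) \<open>x \<in> B\<close> by (auto simp: ideal_vl_def solid_def)
    then have "?u \<in> W n" for n
      using z by (auto simp: solid_lift_def)
    then show "?u = 0"
      using assms(2) by blast
  qed
qed

lemma mem_carrier_top_if_solidly_submetrisable:
  assumes \<tau>: "locally_solid_on UNIV \<tau>" and B: "ideal_vl B" "x \<in> B"
    and "solidly_submetrisable_on B (subtopology \<tau> B)"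
  shows "x \<in> carrier_top \<tau>"
proof -
  obtain \<sigma> where \<sigma>: "locally_solid_on B \<sigma>" "metrizable_space \<sigma>"
    and coarser: "\<And>U. openin \<sigma> U \<Longrightarrow> openin (subtopology \<tau> B) U"
    using assms(4) unfolding solidly_submetrisable_on_def by blast
  have "0 \<in> B"
    using B(1) by (simp add: ideal_vl_def)
  then obtain W where W: "\<And>n. nbhd0 \<sigma> (W n)" "\<And>n. W (Suc n) + W (Suc n) \<subseteq> W n" "(\<Inter>n. W n) \<subseteq> {0}"
    using metrizable_linear_topology_normal_seq \<sigma> unfolding locally_solid_on_def by metis
  define V where "V n = solid_lift B (W n)" for n
  have "nbhd0 \<tau> (V n)" for n
  proof -
    obtain Q where "openin \<sigma> Q" "0 \<in> Q" "Q \<subseteq> W n"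
      using W(1) unfolding nbhd0_def by blast
    moreover obtain T where "openin \<tau> T" "Q = T \<inter> B"
      using coarser[OF \<open>openin \<sigma> Q\<close>] unfolding openin_subtopology by blast
    ultimately show ?thesis
      unfolding V_def using \<tau> by (intro nbhd0_solid_lift) auto
  qed
  moreover have "V (Suc n) + V (Suc n) \<subseteq> V n" for n
    unfolding V_def using B(1) W(2) by (rule solid_lift_add)
  ultimately have "normal_seq \<tau> V"
    unfolding normal_seq_def set_plus_def by blast
  moreover have "x \<in> disjoint_complement (\<Inter>n. V n)"
    using subset_disjoint_complement_solid_lift[OF B(1) W(3)] B(2) unfolding V_def by blast
  moreover have "solid (V n)" for n
    unfolding V_def by (rule solid_solid_lift)
  ultimately show ?thesis
    unfolding carrier_top_def by blast
qed

theorem proposition3p7: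
  fixes \<tau> :: "'a::{ordered_real_vector,lattice} topology"
  assumes "archimedean_vl TYPE('a)"
    and "locally_solid_on UNIV \<tau>"
  shows "locally_solidly_submetrisable \<tau> \<longleftrightarrow> carrier_top \<tau> = UNIV"
proof
  assume "locally_solidly_submetrisable \<tau>"
  then show "carrier_top \<tau> = UNIV"
    using mem_carrier_top_if_solidly_submetrisable[OF assms(2) ideal_band_generated
        mem_band_generated]
    unfolding locally_solidly_submetrisable_def by blast
next
  assume "carrier_top \<tau> = UNIV"
  then show "locally_solidly_submetrisable \<tau>"
    using solidly_submetrisable_on_band_generated assms(2)
    unfolding locally_solidly_submetrisable_def locally_solid_on_def by blast
qed

end
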